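(* Let $p,q\ge 1$ be integers, $C$ a finite set, and $M\in\mathcal M(p,q,C)$. If $\gamma\in C$ satisfies $\operatorname{frq}(\gamma)=\operatorname{frq}(M)$, then $\operatorname{exc}(M)=\operatorname{exc}(\gamma)$.
   Context: $\mathcal M(p,q,C)$ is the set of $p\times q$ matrices $M$ with entries from $C$ such that each row of $M$ has $q$ pairwise distinct entries, each column has $p$ pairwise distinct entries, and every pair $\{\alpha,\beta\}$ of distinct colours of $C$ is good: there is a row or a column of $M$ containing both $\alpha$ and $\beta$. The frequency $\operatorname{frq}(\gamma)$ of $\gamma\in C$ is the number of entries of $M$ equal to $\gamma$, and $\operatorname{frq}(M)$ is the minimum frequency over all colours of $C$. The excess of a colour $\gamma$ of frequency $l$ is $\operatorname{exc}(\gamma)=l(p+q-l-1)-(|C|-1)$, and the excess $\operatorname{exc}(M)$ of $M$ is the minimum of the excesses of colours in $C$. *)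

theory Defs
  imports Main
begin

text \<open>A p x q matrix is a function M :: nat => nat => 'c, with entry M i j for row i < p
  and column j < q (values outside this range are irrelevant).\<close>

definition good_pair :: "nat \<Rightarrow> nat \<Rightarrow> (nat \<Rightarrow> nat \<Rightarrow> 'c) \<Rightarrow> 'c \<Rightarrow> 'c \<Rightarrow> bool" where
  "good_pair p q M \<alpha> \<beta> \<longleftrightarrow>
     (\<exists>i<p. \<alpha> \<in> {M i j | j. j < q} \<and> \<beta> \<in> {M i j | j. j < q}) \<or>
     (\<exists>j<q. \<alpha> \<in> {M i j | i. i < p} \<and> \<beta> \<in> {M i j | i. i < p})"

definition Mset :: "nat \<Rightarrow> nat \<Rightarrow> 'c set \<Rightarrow> (nat \<Rightarrow> nat \<Rightarrow> 'c) set" where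
  "Mset p q C = {M.
     (\<forall>i<p. \<forall>j<q. M i j \<in> C) \<and>
     (\<forall>i<p. \<forall>j<q. \<forall>j'<q. j \<noteq> j' \<longrightarrow> M i j \<noteq> M i j') \<and>
     (\<forall>j<q. \<forall>i<p. \<forall>i'<p. i \<noteq> i' \<longrightarrow> M i j \<noteq> M i' j) \<and>
     (\<forall>\<alpha>\<in>C. \<forall>\<beta>\<in>C. \<alpha> \<noteq> \<beta> \<longrightarrow> good_pair p q M \<alpha> \<beta>)}"

definition frq :: "nat \<Rightarrow> nat \<Rightarrow> (nat \<Rightarrow> nat \<Rightarrow> 'c) \<Rightarrow> 'c \<Rightarrow> nat" where
  "frq p q M \<gamma> = card {(i, j). i < p \<and> j < q \<and> M i j = \<gamma>}"

definition frqM :: "nat \<Rightarrow> nat \<Rightarrow> 'c set \<Rightarrow> (nat \<Rightarrow> nat \<Rightarrow> 'c) \<Rightarrow> nat" where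
  "frqM p q C M = Min ((frq p q M) ` C)"

definition exc :: "nat \<Rightarrow> nat \<Rightarrow> 'c set \<Rightarrow> (nat \<Rightarrow> nat \<Rightarrow> 'c) \<Rightarrow> 'c \<Rightarrow> int" where
  "exc p q C M \<gamma> = (let l = int (frq p q M \<gamma>) in
     l * (int p + int q - l - 1) - (int (card C) - 1))"

definition excM :: "nat \<Rightarrow> nat \<Rightarrow> 'c set \<Rightarrow> (nat \<Rightarrow> nat \<Rightarrow> 'c) \<Rightarrow> int" where
  "excM p q C M = Min ((exc p q C M) ` C)"

end

theory Submission
  imports Defs
begin

text \<open>The excess of a colour of frequency \<open>l\<close> is \<open>l (p + q - l - 1)\<close> minus a constant. This
  quadratic is increasing in \<open>l\<close> as long as \<open>l\<close> stays below the midpoint \<open>(p + q - 1) / 2\<close>, and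
  every frequency lies there: a colour occurs at most once in each row and once in each column,
  so its frequency is at most \<open>min p q\<close>. Hence a colour of minimal frequency has minimal excess.\<close>

lemma frq_le_rows:
  assumes "\<forall>i<p. \<forall>j<q. \<forall>j'<q. j \<noteq> j' \<longrightarrow> M i j \<noteq> M i j'"
  shows "frq p q M \<gamma> \<le> p"
proof -
  let ?S = "{(i, j). i < p \<and> j < q \<and> M i j = \<gamma>}"
  have "inj_on fst ?S"
  proof (rule inj_onI)
    fix x y assume "x \<in> ?S" "y \<in> ?S" "fst x = fst y"
    then show "x = y"
      using assms by (cases x, cases y) fastforce
  qed
  moreover have "fst ` ?S \<subseteq> {..<p}"
    by auto
  ultimately show ?thesis
    unfolding frq_def using card_inj_on_le[of fst ?S "{..<p}"] by simp
qed

lemma frq_le_columns: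
  assumes "\<forall>j<q. \<forall>i<p. \<forall>i'<p. i \<noteq> i' \<longrightarrow> M i j \<noteq> M i' j"
  shows "frq p q M \<gamma> \<le> q"
proof -
  let ?S = "{(i, j). i < p \<and> j < q \<and> M i j = \<gamma>}"
  have "inj_on snd ?S"
  proof (rule inj_onI)
    fix x y assume "x \<in> ?S" "y \<in> ?S" "snd x = snd y"
    then show "x = y"
      using assms by (cases x, cases y) fastforce
  qed
  moreover have "snd ` ?S \<subseteq> {..<q}"
    by auto
  ultimately show ?thesis
    unfolding frq_def using card_inj_on_le[of snd ?S "{..<q}"] by simp
qed

lemma frq_le_Mset:
  assumes "M \<in> Mset p q C"
  shows "frq p q M \<gamma> \<le> p" and "frq p q M \<gamma> \<le> q"
  using assms unfolding Mset_def by (auto intro: frq_le_rows frq_le_columns)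

lemma mult_diff_mono_below_midpoint:
  fixes a b s :: "'a :: linordered_idom"
  assumes "a \<le> b" and "a + b \<le> s - 1"
  shows "a * (s - a - 1) \<le> b * (s - b - 1)"
proof -
  have "b * (s - b - 1) - a * (s - a - 1) = (b - a) * (s - 1 - a - b)"
    by (simp add: algebra_simps)
  also have "\<dots> \<ge> 0"
    using assms by simp
  finally show ?thesis
    by simp
qed

lemma exc_mono_frq:
  assumes "M \<in> Mset p q C" and "frq p q M \<gamma> \<le> frq p q M \<delta>"
  shows "exc p q C M \<gamma> \<le> exc p q C M \<delta>"
proof (cases "frq p q M \<gamma> = frq p q M \<delta>")
  case False
  define a where "a = int (frq p q M \<gamma>)"
  define b where "b = int (frq p q M \<delta>)"
  have "a < b" "b \<le> int q" "b \<le> int p"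
    using assms False frq_le_Mset unfolding a_def b_def by (simp_all add: le_less)
  then have "a * (int p + int q - a - 1) \<le> b * (int p + int q - b - 1)"
    by (intro mult_diff_mono_below_midpoint) auto
  then show ?thesis
    unfolding exc_def a_def b_def Let_def by simp
qed (simp add: exc_def)

theorem lemma2:
  fixes p q :: nat and C :: "'c set" and M :: "nat \<Rightarrow> nat \<Rightarrow> 'c" and \<gamma> :: 'c
  assumes "p \<ge> 1" and "q \<ge> 1" and "finite C"
    and "M \<in> Mset p q C"
    and "\<gamma> \<in> C"
    and "frq p q M \<gamma> = frqM p q C M"
  shows "excM p q C M = exc p q C M \<gamma>"
  unfolding excM_def
proof (rule Min_eqI)
  show "finite (exc p q C M ` C)"
    using \<open>finite C\<close> by simp
  show "exc p q C M \<gamma> \<in> exc p q C M ` C"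
    using \<open>\<gamma> \<in> C\<close> by simp
next
  fix e assume "e \<in> exc p q C M ` C"
  then obtain \<delta> where "\<delta> \<in> C" and e: "e = exc p q C M \<delta>"
    by blast
  have "frq p q M \<gamma> \<le> frq p q M \<delta>"
    using assms(6) \<open>finite C\<close> \<open>\<delta> \<in> C\<close> unfolding frqM_def by simp
  then show "exc p q C M \<gamma> \<le> e"
    unfolding e using exc_mono_frq[OF \<open>M \<in> Mset p q C\<close>] by blast
qed

end
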